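(* Let $N_1$ and $N_2$ be phylogenetic networks on the same set $S$ of taxa, and assume that either (a) $N_1$ and $N_2$ are both tree-child, or (b) $N_1$ and $N_2$ are both semi-binary, time consistent and tree-sibling. Then $\Upsilon(N_1)=\Upsilon(N_2)$ implies $N_1\cong N_2$. Consequently $m(N_1,N_2)=\frac12|\Upsilon(N_1)\bigtriangleup\Upsilon(N_2)|$ is a metric on the class of tree-child phylogenetic networks on $S$ and on the class of semi-binary time consistent tree-sibling phylogenetic networks on $S$.
   Context: A phylogenetic network on a finite set $S$ of taxa is a finite rooted directed acyclic graph whose leaves (nodes without children) are bijectively labeled by $S$; isomorphism $\cong$ means a digraph isomorphism preserving leaf labels. A tree node has at most one parent; a hybrid node has more than one parent. Two children of a common parent are siblings. $N$ is tree-child if every internal node has a child that is a tree node; tree-sibling if every hybrid node has a sibling that is a tree node; semi-binary if every hybrid node has exactly two parents; time consistent if there is a map $\tau:V\to\mathbb N$ with $\tau(u)<\tau(v)$ for every arc $(u,v)$ with $v$ a tree node and $\tau(u)=\tau(v)$ for every arc $(u,v)$ with $v$ hybrid. The height of a node is the largest length of a path from it to a leaf. The nested label $\ell(v)$ is defined inductively: $\ell(v)=\{i\}$ if $v$ is the leaf labeled $i$, and otherwise $\ell(v)$ is the multiset $\{\ell(v_1),\dots,\ell(v_k)\}$ of nested labels of the children $v_1,\dots,v_k$ of $v$. $\Upsilon(N)$ is the multiset of nested labels of all nodes of $N$; $|\cdot|$ of a multiset is the sum of multiplicities and $\bigtriangleup$ is multiset symmetric difference (multiplicity $|M_1(x)-M_2(x)|$).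 *)

theory Defs
  imports Complex_Main "HOL-Library.Multiset"
begin

record ('v, 's) pnet =
  verts :: "'v set"
  arcs  :: "('v \<times> 'v) set"
  lbl   :: "'v \<Rightarrow> 's"

definition children :: "('v, 's) pnet \<Rightarrow> 'v \<Rightarrow> 'v set" where
  "children N v = {w. (v, w) \<in> arcs N}"

definition parents :: "('v, 's) pnet \<Rightarrow> 'v \<Rightarrow> 'v set" where
  "parents N v = {u. (u, v) \<in> arcs N}"

definition leaves :: "('v, 's) pnet \<Rightarrow> 'v set" where
  "leaves N = {v \<in> verts N. children N v = {}}"

definition tree_node :: "('v, 's) pnet \<Rightarrow> 'v \<Rightarrow> bool" where
  "tree_node N v \<longleftrightarrow> card (parents N v) \<le> 1"

definition hybrid_node :: "('v, 's) pnet \<Rightarrow> 'v \<Rightarrow> bool" where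
  "hybrid_node N v \<longleftrightarrow> card (parents N v) > 1"

definition phylo_net :: "'s set \<Rightarrow> ('v, 's) pnet \<Rightarrow> bool" where
  "phylo_net S N \<longleftrightarrow>
     finite (verts N) \<and>
     arcs N \<subseteq> verts N \<times> verts N \<and>
     (\<forall>v. (v, v) \<notin> (arcs N)\<^sup>+) \<and>
     (\<exists>r \<in> verts N. \<forall>v \<in> verts N. (r, v) \<in> (arcs N)\<^sup>*) \<and>
     bij_betw (lbl N) (leaves N) S"

definition tree_child :: "('v, 's) pnet \<Rightarrow> bool" where
  "tree_child N \<longleftrightarrow>
     (\<forall>v \<in> verts N. v \<notin> leaves N \<longrightarrow> (\<exists>c \<in> children N v. tree_node N c))"

definition tree_sibling :: "('v, 's) pnet \<Rightarrow> bool" where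
  "tree_sibling N \<longleftrightarrow>
     (\<forall>h \<in> verts N. hybrid_node N h \<longrightarrow>
        (\<exists>p t. (p, h) \<in> arcs N \<and> (p, t) \<in> arcs N \<and> t \<noteq> h \<and> tree_node N t))"

definition semi_binary :: "('v, 's) pnet \<Rightarrow> bool" where
  "semi_binary N \<longleftrightarrow> (\<forall>h \<in> verts N. hybrid_node N h \<longrightarrow> card (parents N h) = 2)"

definition time_consistent :: "('v, 's) pnet \<Rightarrow> bool" where
  "time_consistent N \<longleftrightarrow>
     (\<exists>\<tau> :: 'v \<Rightarrow> nat. \<forall>(u, v) \<in> arcs N.
        (tree_node N v \<longrightarrow> \<tau> u < \<tau> v) \<and> (hybrid_node N v \<longrightarrow> \<tau> u = \<tau> v))"

text \<open>Nested labels: a leaf labelled i gets NLeaf i (the label {i}); an internal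
  node gets the multiset of nested labels of its children.\<close>
datatype 's nlabel = NLeaf 's | NNode "'s nlabel multiset"

text \<open>Approximation by recursion depth; on a finite DAG it stabilises once the
  depth exceeds the height of the node, which is less than the number of nodes.\<close>
primrec nl :: "('v, 's) pnet \<Rightarrow> nat \<Rightarrow> 'v \<Rightarrow> 's nlabel" where
  "nl N 0 v = (if children N v = {} then NLeaf (lbl N v) else NNode {#})"
| "nl N (Suc n) v = (if children N v = {} then NLeaf (lbl N v)
                     else NNode (image_mset (nl N n) (mset_set (children N v))))"

definition nested_label :: "('v, 's) pnet \<Rightarrow> 'v \<Rightarrow> 's nlabel" where
  "nested_label N v = nl N (card (verts N)) v"

definition Upsilon :: "('v, 's) pnet \<Rightarrow> 's nlabel multiset" where
  "Upsilon N = image_mset (nested_label N) (mset_set (verts N))"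

definition net_iso :: "('v, 's) pnet \<Rightarrow> ('w, 's) pnet \<Rightarrow> bool" where
  "net_iso N1 N2 \<longleftrightarrow> (\<exists>f. bij_betw f (verts N1) (verts N2) \<and>
     (\<forall>u \<in> verts N1. \<forall>v \<in> verts N1. (u, v) \<in> arcs N1 \<longleftrightarrow> (f u, f v) \<in> arcs N2) \<and>
     (\<forall>v \<in> leaves N1. lbl N2 (f v) = lbl N1 v))"

definition msymdiff :: "'a multiset \<Rightarrow> 'a multiset \<Rightarrow> 'a multiset" where
  "msymdiff M1 M2 = (M1 - M2) + (M2 - M1)"

definition mdist :: "('v, 's) pnet \<Rightarrow> ('w, 's) pnet \<Rightarrow> real" where
  "mdist N1 N2 = real (size (msymdiff (Upsilon N1) (Upsilon N2))) / 2"

definition in_class :: "bool \<Rightarrow> ('v, 's) pnet \<Rightarrow> bool" where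
  "in_class b N \<longleftrightarrow> (if b then tree_child N
                       else semi_binary N \<and> time_consistent N \<and> tree_sibling N)"

end

theory Submission
  imports Defs
begin

text \<open>In a finite DAG the nested label of an internal node is the multiset of the labels of its
  children. So if labels separate the nodes below u, every node with the same label as u has the
  same set of children, and by well-founded induction nested labels are injective as soon as
  distinct internal nodes have distinct sets of children. Two distinct nodes with the same children
  make all these children hybrid: in a tree-child network this contradicts the existence of a tree
  child, and in a semi-binary tree-sibling network a common child h has exactly the two nodes as
  parents, so the tree sibling of h is again a common child. Injective nested labels determine the
  arcs, hence the network up to isomorphism; the metric axioms then reduce to properties of the
  symmetric difference of multisets.\<close>

definition finite_dag :: "('v, 's) pnet \<Rightarrow> bool" where
  "finite_dag N \<longleftrightarrow> finite (verts N) \<and> arcs N \<subseteq> verts N \<times> verts N \<and> acyclic (arcs N)"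

lemma phylo_net_finite_dag: "phylo_net S N \<Longrightarrow> finite_dag N"
  by (simp add: phylo_net_def finite_dag_def acyclic_def)

lemma children_subset_verts: "finite_dag N \<Longrightarrow> children N v \<subseteq> verts N"
  by (auto simp: finite_dag_def children_def)

lemma finite_children: "finite_dag N \<Longrightarrow> finite (children N v)"
  by (metis children_subset_verts finite_dag_def finite_subset)

lemma finite_parents: "finite_dag N \<Longrightarrow> finite (parents N v)"
  by (rule finite_subset[of _ "verts N"]) (auto simp: finite_dag_def parents_def)

lemma wf_converse_arcs:
  assumes "finite_dag N" shows "wf ((arcs N)\<inverse>)"
proof -
  have "finite (arcs N)"
    using assms finite_subset[of "arcs N" "verts N \<times> verts N"] by (simp add: finite_dag_def)
  then show ?thesis using assms finite_acyclic_wf_converse unfolding finite_dag_def by blast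
qed

subsection \<open>The recursion for nested labels\<close>

definition descendants :: "('v, 's) pnet \<Rightarrow> 'v \<Rightarrow> 'v set" where
  "descendants N v = {w. (v, w) \<in> (arcs N)\<^sup>+}"

lemma descendants_subset_verts:
  assumes "finite_dag N" shows "descendants N v \<subseteq> verts N"
proof -
  have "(arcs N)\<^sup>+ \<subseteq> verts N \<times> verts N"
    using assms trancl_subset_Sigma unfolding finite_dag_def by blast
  then show ?thesis by (auto simp: descendants_def)
qed

lemma card_descendants_less:
  assumes N: "finite_dag N" and arc: "(v, c) \<in> arcs N"
  shows "card (descendants N c) < card (descendants N v)"
proof -
  have "descendants N c \<subseteq> descendants N v"
    using arc by (auto simp: descendants_def intro: trancl_into_trancl2)
  moreover have "c \<in> descendants N v" "c \<notin> descendants N c"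
    using arc N by (auto simp: descendants_def finite_dag_def acyclic_def)
  ultimately have "descendants N c \<subset> descendants N v" by blast
  moreover have "finite (descendants N v)"
    by (metis N descendants_subset_verts finite_dag_def finite_subset)
  ultimately show ?thesis by (rule psubset_card_mono[rotated])
qed

text \<open>The number of descendants bounds the height of a node, so it is a depth at which the
  approximations nl have stabilised.\<close>
lemma nl_stable:
  assumes N: "finite_dag N"
  shows "card (descendants N v) \<le> n \<Longrightarrow> card (descendants N v) \<le> m \<Longrightarrow> nl N n v = nl N m v"
proof (induction "card (descendants N v)" arbitrary: v n m rule: less_induct)
  case less
  show ?case
  proof (cases "children N v = {}")
    case True
    then show ?thesis by (cases n; cases m) simp_all
  next
    case False
    then have "card (descendants N v) > 0"
      using card_descendants_less[OF N] by (force simp: children_def)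
    then obtain n' m' where nm: "n = Suc n'" "m = Suc m'"
      using less.prems by (cases n; cases m) auto
    have "nl N n' c = nl N m' c" if "c \<in> children N v" for c
    proof -
      have "card (descendants N c) < card (descendants N v)"
        using that card_descendants_less[OF N] by (simp add: children_def)
      then show ?thesis using less nm by simp
    qed
    then have "image_mset (nl N n') (mset_set (children N v))
             = image_mset (nl N m') (mset_set (children N v))"
      using finite_children[OF N] by (intro image_mset_cong) simp
    then show ?thesis using nm False by simp
  qed
qed

lemma nested_label_rec:
  assumes N: "finite_dag N"
  shows "nested_label N v = (if children N v = {} then NLeaf (lbl N v)
           else NNode (image_mset (nested_label N) (mset_set (children N v))))"
proof (cases "children N v = {}")
  case True
  then show ?thesis by (cases "card (verts N)") (simp_all add: nested_label_def)
next
  case False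
  have bound: "card (descendants N v) \<le> card (verts N)"
    using N descendants_subset_verts card_mono finite_dag_def by metis
  moreover have "card (descendants N v) > 0"
    using False card_descendants_less[OF N] by (force simp: children_def)
  ultimately obtain k where k: "card (verts N) = Suc k" by (cases "card (verts N)") auto
  have "nl N k c = nested_label N c" if "c \<in> children N v" for c
  proof -
    have "card (descendants N c) < card (descendants N v)"
      using that card_descendants_less[OF N] by (simp add: children_def)
    then show ?thesis
      unfolding nested_label_def using nl_stable[OF N, of c k "card (verts N)"] bound k by simp
  qed
  then have "image_mset (nl N k) (mset_set (children N v))
           = image_mset (nested_label N) (mset_set (children N v))"
    using finite_children[OF N] by (intro image_mset_cong) simp
  then show ?thesis using False k by (simp add: nested_label_def)
qed

lemma nested_label_leaf: "finite_dag N \<Longrightarrow> v \<in> leaves N \<Longrightarrow> nested_label N v = NLeaf (lbl N v)"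
  using nested_label_rec[of N v] by (simp add: leaves_def)

lemma nested_label_eq_NLeaf:
  "finite_dag N \<Longrightarrow> v \<in> verts N \<Longrightarrow> nested_label N v = NLeaf s \<Longrightarrow> v \<in> leaves N \<and> lbl N v = s"
  by (subst (asm) nested_label_rec) (auto simp: leaves_def split: if_splits)

lemma set_mset_Upsilon: "finite_dag N \<Longrightarrow> set_mset (Upsilon N) = nested_label N ` verts N"
  by (simp add: Upsilon_def finite_dag_def)

subsection \<open>Injectivity of nested labels\<close>

lemma children_eq_if_nested_label_eq:
  assumes N: "finite_dag N" and v: "v \<in> verts N"
    and eq: "nested_label N u = nested_label N v"
    and below: "\<And>c d. c \<in> children N u \<Longrightarrow> d \<in> verts N \<Longrightarrow>
                  nested_label N c = nested_label N d \<Longrightarrow> c = d"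
  shows "children N u = children N v"
proof (cases "children N u = {}")
  case True
  then show ?thesis using eq nested_label_rec[OF N, of u] nested_label_rec[OF N, of v]
    by (auto split: if_splits)
next
  case False
  then have "children N v \<noteq> {}"
    using eq nested_label_rec[OF N, of u] nested_label_rec[OF N, of v] by (auto split: if_splits)
  with False eq nested_label_rec[OF N, of u] nested_label_rec[OF N, of v]
  have "image_mset (nested_label N) (mset_set (children N u))
      = image_mset (nested_label N) (mset_set (children N v))" by auto
  then have img: "nested_label N ` children N u = nested_label N ` children N v"
    by (metis N finite_children finite_set_mset_mset_set set_image_mset)
  show ?thesis
  proof (intro equalityI subsetI)
    fix c assume c: "c \<in> children N u"
    then obtain d where "d \<in> children N v" "nested_label N c = nested_label N d"
      using img by (metis imageE imageI)
    then show "c \<in> children N v" using below[OF c] children_subset_verts[OF N] by blast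
  next
    fix d assume d: "d \<in> children N v"
    then obtain c where "c \<in> children N u" "nested_label N d = nested_label N c"
      using img by (metis imageE imageI)
    then show "d \<in> children N u" using below d children_subset_verts[OF N] by (metis subsetD)
  qed
qed

lemma nested_label_inj_on:
  assumes N: "finite_dag N"
    and leaves_inj: "inj_on (lbl N) (leaves N)"
    and children_inj: "inj_on (children N) (verts N - leaves N)"
  shows "inj_on (nested_label N) (verts N)"
proof -
  have "u = v" if "u \<in> verts N" "v \<in> verts N" "nested_label N u = nested_label N v" for u v
    using that
  proof (induction u arbitrary: v rule: wf_induct_rule[OF wf_converse_arcs[OF N]])
    case (1 u)
    have "c = d" if "c \<in> children N u" "d \<in> verts N" "nested_label N c = nested_label N d"
      for c d
      using 1(1)[of c d] that children_subset_verts[OF N] by (auto simp: children_def)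
    then have same: "children N u = children N v"
      by (rule children_eq_if_nested_label_eq[OF N 1(3,4)])
    show "u = v"
    proof (cases "children N u = {}")
      case True
      then have "u \<in> leaves N" "v \<in> leaves N" "lbl N u = lbl N v"
        using 1(2-4) same nested_label_leaf[OF N]
        by (auto simp: leaves_def)
      then show ?thesis using leaves_inj by (simp add: inj_on_def)
    next
      case False
      then show ?thesis
        using children_inj same 1(2,3) by (auto simp: inj_on_def leaves_def)
    qed
  qed
  then show ?thesis by (meson inj_onI)
qed

lemma common_child_hybrid:
  assumes "finite_dag N" "u \<noteq> v" "c \<in> children N u" "c \<in> children N v"
  shows "hybrid_node N c"
proof -
  have "{u, v} \<subseteq> parents N c" using assms(3,4) by (auto simp: children_def parents_def)
  then have "card {u, v} \<le> card (parents N c)" by (meson assms(1) card_mono finite_parents)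
  then show ?thesis using assms(2) by (simp add: hybrid_node_def)
qed

lemma tree_node_not_hybrid: "tree_node N v \<Longrightarrow> \<not> hybrid_node N v"
  by (simp add: tree_node_def hybrid_node_def)

lemma tree_child_children_inj:
  assumes N: "finite_dag N" and tc: "tree_child N"
  shows "inj_on (children N) (verts N - leaves N)"
proof (rule inj_onI, rule ccontr)
  fix u v assume u: "u \<in> verts N - leaves N" and "v \<in> verts N - leaves N"
    and same: "children N u = children N v" and "u \<noteq> v"
  obtain c where "c \<in> children N u" "tree_node N c" using tc u by (auto simp: tree_child_def)
  then show False
    using common_child_hybrid[OF N \<open>u \<noteq> v\<close>] same tree_node_not_hybrid by metis
qed

lemma tree_sibling_children_inj:
  assumes N: "finite_dag N" and sb: "semi_binary N" and ts: "tree_sibling N"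
  shows "inj_on (children N) (verts N - leaves N)"
proof (rule inj_onI, rule ccontr)
  fix u v assume u: "u \<in> verts N - leaves N" and "v \<in> verts N - leaves N"
    and same: "children N u = children N v" and ne: "u \<noteq> v"
  obtain h where h: "h \<in> children N u" using u by (auto simp: leaves_def)
  have hybrid: "hybrid_node N h" using common_child_hybrid[OF N ne h] h same by simp
  have h_vert: "h \<in> verts N" using h children_subset_verts[OF N] by blast
  have "{u, v} \<subseteq> parents N h" using h same by (auto simp: children_def parents_def)
  moreover have "card (parents N h) = card {u, v}"
    using sb hybrid h_vert ne by (simp add: semi_binary_def)
  ultimately have parents_h: "parents N h = {u, v}"
    by (metis N card_subset_eq finite_parents)
  obtain p t where "(p, h) \<in> arcs N" "(p, t) \<in> arcs N" "tree_node N t"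
    using ts hybrid h_vert unfolding tree_sibling_def by blast
  moreover from this parents_h have "t \<in> children N u"
    using same by (auto simp: parents_def children_def)
  ultimately show False
    using common_child_hybrid[OF N ne] same tree_node_not_hybrid by metis
qed

lemma in_class_nested_label_inj_on:
  assumes "phylo_net S N" "in_class b N"
  shows "inj_on (nested_label N) (verts N)"
proof -
  have N: "finite_dag N" using assms(1) by (rule phylo_net_finite_dag)
  moreover have "inj_on (lbl N) (leaves N)" using assms(1) by (simp add: phylo_net_def bij_betw_def)
  moreover have "inj_on (children N) (verts N - leaves N)"
    using assms(2) tree_child_children_inj[OF N] tree_sibling_children_inj[OF N]
    by (cases b) (auto simp: in_class_def)
  ultimately show ?thesis by (rule nested_label_inj_on)
qed

subsection \<open>Nested labels and isomorphism\<close>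

lemma arc_iff_nested_label:
  assumes N: "finite_dag N" and inj: "inj_on (nested_label N) (verts N)"
    and "u \<in> verts N" "w \<in> verts N"
  shows "(u, w) \<in> arcs N \<longleftrightarrow> (\<exists>M. nested_label N u = NNode M \<and> nested_label N w \<in># M)"
proof (cases "children N u = {}")
  case True
  then show ?thesis using nested_label_rec[OF N, of u] by (auto simp: children_def)
next
  case False
  have "nested_label N w \<in> nested_label N ` children N u \<longleftrightarrow> w \<in> children N u"
    using inj assms(4) children_subset_verts[OF N, of u] by (auto simp: inj_on_def)
  then show ?thesis using nested_label_rec[OF N, of u] False finite_children[OF N, of u]
    by (auto simp: children_def)
qed

lemma net_iso_if_Upsilon_eq:
  fixes N1 :: "('v1, 's) pnet" and N2 :: "('v2, 's) pnet"
  assumes N1: "finite_dag N1" and N2: "finite_dag N2"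
    and inj1: "inj_on (nested_label N1) (verts N1)" and inj2: "inj_on (nested_label N2) (verts N2)"
    and eq: "Upsilon N1 = Upsilon N2"
  shows "net_iso N1 N2"
proof -
  let ?l1 = "nested_label N1" and ?l2 = "nested_label N2"
  have img: "?l1 ` verts N1 = ?l2 ` verts N2"
    using set_mset_Upsilon[OF N1] set_mset_Upsilon[OF N2] eq by simp
  define f where "f = inv_into (verts N2) ?l2 \<circ> ?l1"
  have "bij_betw ?l1 (verts N1) (?l2 ` verts N2)" using inj1 img by (simp add: bij_betw_def)
  moreover have "bij_betw (inv_into (verts N2) ?l2) (?l2 ` verts N2) (verts N2)"
    using bij_betw_inv_into[of ?l2 "verts N2" "?l2 ` verts N2"] inj2 by (simp add: bij_betw_def)
  ultimately have bij: "bij_betw f (verts N1) (verts N2)"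
    unfolding f_def by (rule bij_betw_trans)
  have f_vert: "f v \<in> verts N2" if "v \<in> verts N1" for v using bij that bij_betwE by blast
  have label_f: "?l2 (f v) = ?l1 v" if "v \<in> verts N1" for v
  proof -
    have "?l1 v \<in> ?l2 ` verts N2" using that img by blast
    then show ?thesis by (simp add: f_def f_inv_into_f)
  qed
  have "\<forall>u \<in> verts N1. \<forall>v \<in> verts N1. (u, v) \<in> arcs N1 \<longleftrightarrow> (f u, f v) \<in> arcs N2"
    using arc_iff_nested_label[OF N1 inj1] arc_iff_nested_label[OF N2 inj2] label_f f_vert by simp
  moreover have "lbl N2 (f v) = lbl N1 v" if "v \<in> leaves N1" for v
  proof -
    have v: "v \<in> verts N1" using that by (simp add: leaves_def)
    then have "?l2 (f v) = NLeaf (lbl N1 v)" using label_f nested_label_leaf[OF N1 that] by simp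
    then show ?thesis using nested_label_eq_NLeaf[OF N2 f_vert[OF v]] by blast
  qed
  ultimately show ?thesis using bij unfolding net_iso_def by blast
qed

lemma children_image_if_iso:
  assumes N1: "finite_dag N1" and N2: "finite_dag N2"
    and bij: "bij_betw f (verts N1) (verts N2)"
    and arcs: "\<forall>u \<in> verts N1. \<forall>v \<in> verts N1. (u, v) \<in> arcs N1 \<longleftrightarrow> (f u, f v) \<in> arcs N2"
    and v: "v \<in> verts N1"
  shows "children N2 (f v) = f ` children N1 v"
proof (intro equalityI subsetI)
  fix w assume w: "w \<in> children N2 (f v)"
  then have "w \<in> verts N2" using children_subset_verts[OF N2] by blast
  then obtain x where "x \<in> verts N1" "w = f x"
    using bij by (metis bij_betw_imp_surj_on imageE)
  then show "w \<in> f ` children N1 v" using arcs v w by (auto simp: children_def)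
next
  fix w assume "w \<in> f ` children N1 v"
  then show "w \<in> children N2 (f v)"
    using arcs v children_subset_verts[OF N1, of v] by (auto simp: children_def)
qed

lemma nl_image_if_iso:
  assumes N1: "finite_dag N1" and N2: "finite_dag N2"
    and bij: "bij_betw f (verts N1) (verts N2)"
    and arcs: "\<forall>u \<in> verts N1. \<forall>v \<in> verts N1. (u, v) \<in> arcs N1 \<longleftrightarrow> (f u, f v) \<in> arcs N2"
    and lbl: "\<forall>v \<in> leaves N1. lbl N2 (f v) = lbl N1 v"
  shows "v \<in> verts N1 \<Longrightarrow> nl N2 n (f v) = nl N1 n v"
proof (induction n arbitrary: v)
  case 0
  then show ?case using children_image_if_iso[OF N1 N2 bij arcs] lbl by (auto simp: leaves_def)
next
  case (Suc n v)
  note children_f = children_image_if_iso[OF N1 N2 bij arcs Suc.prems]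
  have "inj_on f (children N1 v)"
    using bij children_subset_verts[OF N1, of v] inj_on_subset by (blast dest: bij_betw_imp_inj_on)
  then have "image_mset (nl N2 n) (mset_set (children N2 (f v)))
      = image_mset (nl N2 n \<circ> f) (mset_set (children N1 v))"
    using children_f by (simp add: image_mset_mset_set[symmetric] multiset.map_comp)
  also have "\<dots> = image_mset (nl N1 n) (mset_set (children N1 v))"
    using Suc.IH children_subset_verts[OF N1, of v] finite_children[OF N1, of v]
    by (intro image_mset_cong) auto
  finally show ?case using children_f lbl Suc.prems by (auto simp: leaves_def)
qed

lemma Upsilon_eq_if_net_iso:
  fixes N1 :: "('v1, 's) pnet" and N2 :: "('v2, 's) pnet"
  assumes N1: "finite_dag N1" and N2: "finite_dag N2" and "net_iso N1 N2"
  shows "Upsilon N1 = Upsilon N2"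
proof -
  obtain f where bij: "bij_betw f (verts N1) (verts N2)"
    and arcs: "\<forall>u \<in> verts N1. \<forall>v \<in> verts N1. (u, v) \<in> arcs N1 \<longleftrightarrow> (f u, f v) \<in> arcs N2"
    and lbl: "\<forall>v \<in> leaves N1. lbl N2 (f v) = lbl N1 v"
    using assms(3) unfolding net_iso_def by blast
  have card: "card (verts N2) = card (verts N1)" using bij bij_betw_same_card by metis
  have "Upsilon N2 = image_mset (nested_label N2) (mset_set (f ` verts N1))"
    unfolding Upsilon_def using bij bij_betw_imp_surj_on by metis
  also have "\<dots> = image_mset (nested_label N2 \<circ> f) (mset_set (verts N1))"
    using image_mset_mset_set[OF bij_betw_imp_inj_on[OF bij]] by (metis multiset.map_comp)
  also have "\<dots> = Upsilon N1"
    unfolding Upsilon_def nested_label_def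
    using nl_image_if_iso[OF N1 N2 bij arcs lbl] card N1 by (intro image_mset_cong) (auto simp: finite_dag_def)
  finally show ?thesis by simp
qed

lemma msymdiff_commute: "msymdiff A B = msymdiff B A"
  by (simp add: msymdiff_def add.commute)

lemma msymdiff_eq_empty_iff: "msymdiff A B = {#} \<longleftrightarrow> A = B"
  by (auto simp: msymdiff_def Diff_eq_empty_iff_mset intro: subset_mset.antisym)

lemma size_msymdiff_triangle:
  "size (msymdiff A C) \<le> size (msymdiff A B) + size (msymdiff B C)"
proof -
  have "msymdiff A C \<subseteq># msymdiff A B + msymdiff B C"
    by (rule mset_subset_eqI) (simp add: msymdiff_def)
  then show ?thesis by (metis size_mset_mono size_union)
qed

theorem corollary3:
  fixes S :: "'s set" and b :: bool
    and N1 :: "('v1, 's) pnet" and N2 :: "('v2, 's) pnet" and N3 :: "('v3, 's) pnet"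
  assumes "phylo_net S N1" and "phylo_net S N2" and "phylo_net S N3"
    and "in_class b N1" and "in_class b N2" and "in_class b N3"
  shows "(Upsilon N1 = Upsilon N2 \<longrightarrow> net_iso N1 N2)
         \<and> mdist N1 N2 \<ge> 0
         \<and> (mdist N1 N2 = 0 \<longleftrightarrow> net_iso N1 N2)
         \<and> mdist N1 N2 = mdist N2 N1
         \<and> mdist N1 N3 \<le> mdist N1 N2 + mdist N2 N3"
proof -
  have N1: "finite_dag N1" and N2: "finite_dag N2"
    using assms(1,2) by (simp_all add: phylo_net_finite_dag)
  have "inj_on (nested_label N1) (verts N1)" "inj_on (nested_label N2) (verts N2)"
    using in_class_nested_label_inj_on assms by blast+
  then have "net_iso N1 N2 \<longleftrightarrow> Upsilon N1 = Upsilon N2"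
    using net_iso_if_Upsilon_eq[OF N1 N2] Upsilon_eq_if_net_iso[OF N1 N2] by blast
  moreover have "mdist N1 N2 \<ge> 0" by (simp add: mdist_def)
  moreover have "mdist N1 N2 = 0 \<longleftrightarrow> Upsilon N1 = Upsilon N2"
    by (simp add: mdist_def msymdiff_eq_empty_iff)
  moreover have "mdist N1 N2 = mdist N2 N1" by (simp add: mdist_def msymdiff_commute)
  moreover have "mdist N1 N3 \<le> mdist N1 N2 + mdist N2 N3"
    using size_msymdiff_triangle[where A = "Upsilon N1" and B = "Upsilon N2" and C = "Upsilon N3"]
    unfolding mdist_def by (simp flip: of_nat_add)
  ultimately show ?thesis by simp
qed

end
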